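(* The energy $W^-_{\mathrm{magic}}\colon\mathrm{GL}^+(2)\to\mathbb{R}$, \[ W^-_{\mathrm{magic}}(F)=\frac{\lambda_{\max}}{\lambda_{\min}}+\log\!\left(\frac{\lambda_{\max}}{\lambda_{\min}}\right)-\log(\lambda_{\max}\lambda_{\min})=\frac{\lambda_{\max}}{\lambda_{\min}}-2\log\lambda_{\min}, \] where $\lambda_{\max}\ge\lambda_{\min}>0$ are the ordered singular values of $F$, is polyconvex.
   Context: $\mathrm{GL}^+(2)=\{F\in\mathbb{R}^{2\times2}:\det F>0\}$. A function $W\colon\mathrm{GL}^+(2)\to\mathbb{R}$ is polyconvex if its extension $\widehat W\colon\mathbb{R}^{2\times2}\to\mathbb{R}\cup\{+\infty\}$ ($\widehat W=W$ on $\mathrm{GL}^+(2)$, $+\infty$ elsewhere) can be written as $\widehat W(F)=P(F,\det F)$ for all $F\in\mathbb{R}^{2\times2}$ with some convex function $P\colon\mathbb{R}^{2\times2}\times\mathbb{R}\to\mathbb{R}\cup\{+\infty\}$. *)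

theory Defs
  imports "HOL-Analysis.Analysis"
begin

definition singular_values :: "real^2^2 \<Rightarrow> real set" where
  "singular_values F = {s. s \<ge> 0 \<and> (\<exists>v::real^2. v \<noteq> 0 \<and> (transpose F ** F) *v v = (s^2) *\<^sub>R v)}"

definition lambda_max :: "real^2^2 \<Rightarrow> real" where
  "lambda_max F = Max (singular_values F)"

definition lambda_min :: "real^2^2 \<Rightarrow> real" where
  "lambda_min F = Min (singular_values F)"

text \<open>Polyconvexity on GL+(2): the extension by +infinity outside GL+(2) is of the form
  P(F, det F) with P convex with values in R \<union> {+\<infinity>} (convexity expressed via the
  convexity of the epigraph).\<close>
definition ext_convex :: "('a::real_vector \<Rightarrow> ereal) \<Rightarrow> bool" where
  "ext_convex P \<longleftrightarrow> (\<forall>z. P z \<noteq> -\<infinity>) \<and> convex {(z, r::real). P z \<le> ereal r}"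

definition polyconvex :: "(real^2^2 \<Rightarrow> real) \<Rightarrow> bool" where
  "polyconvex W \<longleftrightarrow> (\<exists>P :: ((real^2^2) \<times> real) \<Rightarrow> ereal. ext_convex P \<and>
     (\<forall>F. P (F, det F) = (if det F > 0 then ereal (W F) else \<infinity>)))"

definition W_magic_minus :: "real^2^2 \<Rightarrow> real" where
  "W_magic_minus F = lambda_max F / lambda_min F + ln (lambda_max F / lambda_min F)
                     - ln (lambda_max F * lambda_min F)"

end

theory Submission
  imports Defs
begin

text \<open>
  For \<open>det F > 0\<close> the singular values satisfy \<open>\<lambda>\<^sub>m\<^sub>a\<^sub>x - \<lambda>\<^sub>m\<^sub>i\<^sub>n = |F\<^sup>-|\<close> and
  \<open>\<lambda>\<^sub>m\<^sub>a\<^sub>x \<lambda>\<^sub>m\<^sub>i\<^sub>n = det F\<close>, where \<open>|F\<^sup>-|\<close> (the size of the anticonformal part of \<open>F\<close>) is a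
  seminorm. Hence for every \<open>t > 0\<close> the function
  \<open>h\<^sub>t(F, \<delta>) = 2 + 2 |F\<^sup>-| / t - \<delta> / t\<^sup>2 - 2 ln t\<close> is convex in \<open>(F, \<delta>)\<close>, and at
  \<open>\<delta> = det F\<close> it stays below \<open>W(F) = \<lambda>\<^sub>m\<^sub>a\<^sub>x / \<lambda>\<^sub>m\<^sub>i\<^sub>n - 2 ln \<lambda>\<^sub>m\<^sub>i\<^sub>n\<close>, with equality
  at \<open>t = \<lambda>\<^sub>m\<^sub>i\<^sub>n\<close>. So \<open>P = sup\<^sub>t h\<^sub>t\<close> is convex and \<open>P(F, det F) = W(F)\<close> on
  \<open>GL\<^sup>+(2)\<close>, while for \<open>\<delta> \<le> 0\<close> the term \<open>-2 ln t\<close> drives \<open>P(F, \<delta>)\<close> to \<open>+\<infinity>\<close> as \<open>t \<rightarrow> 0\<close>.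
\<close>

lemma det_eq_0_iff_nontrivial_kernel:
  fixes A :: "real^'n^'n"
  shows "det A = 0 \<longleftrightarrow> (\<exists>x. x \<noteq> 0 \<and> A *v x = 0)"
  using rank_bound[of A] by (auto simp: det_eq_0_rank matrix_nonfull_linear_equations_eq)

lemma has_eigenvector_iff_det:
  fixes M :: "real^'n^'n"
  shows "(\<exists>v. v \<noteq> 0 \<and> M *v v = \<mu> *\<^sub>R v) \<longleftrightarrow> det (M - \<mu> *\<^sub>R mat 1) = 0"
proof -
  have "(M - \<mu> *\<^sub>R mat 1) *v v = M *v v - \<mu> *\<^sub>R v" for v
    by (simp add: matrix_vector_mult_diff_rdistrib flip: scaleR_matrix_vector_assoc)
  then show ?thesis by (simp add: det_eq_0_iff_nontrivial_kernel)
qed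

text \<open>Writing \<open>F z = \<alpha> z + \<beta> conj z\<close> on \<open>\<complex> = \<real>\<^sup>2\<close>, these are \<open>2|\<alpha>|\<close> and \<open>2|\<beta>|\<close>; for
  \<open>det F \<ge> 0\<close> they equal \<open>\<lambda>\<^sub>m\<^sub>a\<^sub>x + \<lambda>\<^sub>m\<^sub>i\<^sub>n\<close> and \<open>\<lambda>\<^sub>m\<^sub>a\<^sub>x - \<lambda>\<^sub>m\<^sub>i\<^sub>n\<close>.\<close>

definition conformal_norm :: "real^2^2 \<Rightarrow> real" where
  "conformal_norm F = sqrt ((F$1$1 + F$2$2)^2 + (F$1$2 - F$2$1)^2)"

definition anticonformal_norm :: "real^2^2 \<Rightarrow> real" where
  "anticonformal_norm F = sqrt ((F$1$1 - F$2$2)^2 + (F$1$2 + F$2$1)^2)"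

lemma conformal_norm_nonneg: "0 \<le> conformal_norm F"
  by (simp add: conformal_norm_def)

lemma anticonformal_norm_nonneg: "0 \<le> anticonformal_norm F"
  by (simp add: anticonformal_norm_def)

lemma conformal_norm_sq: "(conformal_norm F)\<^sup>2 = (F$1$1 + F$2$2)\<^sup>2 + (F$1$2 - F$2$1)\<^sup>2"
  by (simp add: conformal_norm_def)

lemma anticonformal_norm_sq: "(anticonformal_norm F)\<^sup>2 = (F$1$1 - F$2$2)\<^sup>2 + (F$1$2 + F$2$1)\<^sup>2"
  by (simp add: anticonformal_norm_def)

lemma conformal_norm_sq_minus_anticonformal_norm_sq:
  "(conformal_norm F)\<^sup>2 - (anticonformal_norm F)\<^sup>2 = 4 * det F"
  unfolding conformal_norm_sq anticonformal_norm_sq det_2 by algebra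

lemma conformal_norm_sq_plus_anticonformal_norm_sq:
  "(conformal_norm F)\<^sup>2 + (anticonformal_norm F)\<^sup>2
     = 2 * ((F$1$1)\<^sup>2 + (F$1$2)\<^sup>2 + (F$2$1)\<^sup>2 + (F$2$2)\<^sup>2)"
  unfolding conformal_norm_sq anticonformal_norm_sq by algebra

lemma det_transpose_mult_minus_scaleR:
  fixes F :: "real^2^2"
  shows "det (transpose F ** F - x *\<^sub>R mat 1)
           = x\<^sup>2 - ((F$1$1)\<^sup>2 + (F$1$2)\<^sup>2 + (F$2$1)\<^sup>2 + (F$2$2)\<^sup>2) * x + (det F)\<^sup>2"
  by (simp add: det_2 matrix_matrix_mult_def transpose_def sum_2 mat_def power2_eq_square)
     algebra

lemma singular_values_2x2:
  "singular_values F
     = {(conformal_norm F + anticonformal_norm F) / 2, \<bar>conformal_norm F - anticonformal_norm F\<bar> / 2}"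
  (is "_ = {?a, ?b}")
proof -
  have nonneg: "0 \<le> ?a" "0 \<le> ?b"
    using conformal_norm_nonneg anticonformal_norm_nonneg by auto
  have "?a\<^sup>2 + ?b\<^sup>2 = ((conformal_norm F)\<^sup>2 + (anticonformal_norm F)\<^sup>2) / 2"
    by (simp add: power2_eq_square field_simps)
  also have "\<dots> = (F$1$1)\<^sup>2 + (F$1$2)\<^sup>2 + (F$2$1)\<^sup>2 + (F$2$2)\<^sup>2"
    by (simp add: conformal_norm_sq_plus_anticonformal_norm_sq)
  finally have sum_sq: "?a\<^sup>2 + ?b\<^sup>2 = (F$1$1)\<^sup>2 + (F$1$2)\<^sup>2 + (F$2$1)\<^sup>2 + (F$2$2)\<^sup>2" .
  have "(?a * ?b)\<^sup>2 = ((conformal_norm F)\<^sup>2 - (anticonformal_norm F)\<^sup>2)\<^sup>2 / 16"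
    by (simp add: power2_eq_square field_simps)
  also have "\<dots> = (det F)\<^sup>2"
    unfolding conformal_norm_sq_minus_anticonformal_norm_sq by (simp add: power2_eq_square)
  finally have prod_sq: "(?a * ?b)\<^sup>2 = (det F)\<^sup>2" .
  have char: "det (transpose F ** F - s\<^sup>2 *\<^sub>R mat 1) = (s\<^sup>2 - ?a\<^sup>2) * (s\<^sup>2 - ?b\<^sup>2)" for s
  proof -
    have "(s\<^sup>2 - ?a\<^sup>2) * (s\<^sup>2 - ?b\<^sup>2) = (s\<^sup>2)\<^sup>2 - (?a\<^sup>2 + ?b\<^sup>2) * s\<^sup>2 + (?a * ?b)\<^sup>2"
      by algebra
    then show ?thesis
      by (simp only: det_transpose_mult_minus_scaleR sum_sq prod_sq)
  qed
  show ?thesis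
  proof (rule set_eqI)
    fix s
    have "s \<in> singular_values F \<longleftrightarrow> 0 \<le> s \<and> (s\<^sup>2 = ?a\<^sup>2 \<or> s\<^sup>2 = ?b\<^sup>2)"
      by (simp add: singular_values_def has_eigenvector_iff_det char)
    also have "\<dots> \<longleftrightarrow> s = ?a \<or> s = ?b"
      using nonneg power2_eq_iff_nonneg by blast
    finally show "s \<in> singular_values F \<longleftrightarrow> s \<in> {?a, ?b}"
      by simp
  qed
qed

lemma anticonformal_norm_le_conformal_norm:
  assumes "0 \<le> det F"
  shows "anticonformal_norm F \<le> conformal_norm F"
  using conformal_norm_sq_minus_anticonformal_norm_sq[of F] assms conformal_norm_nonneg[of F]
  by (smt (verit) power2_le_imp_le)

lemma anticonformal_norm_less_conformal_norm:
  assumes "0 < det F"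
  shows "anticonformal_norm F < conformal_norm F"
  using conformal_norm_sq_minus_anticonformal_norm_sq[of F] assms conformal_norm_nonneg[of F]
  by (smt (verit) power2_less_imp_less)

lemma
  assumes "0 \<le> det F"
  shows lambda_max_eq: "lambda_max F = (conformal_norm F + anticonformal_norm F) / 2"
    and lambda_min_eq: "lambda_min F = (conformal_norm F - anticonformal_norm F) / 2"
  using anticonformal_norm_le_conformal_norm[OF assms] anticonformal_norm_nonneg[of F]
  by (simp_all add: lambda_max_def lambda_min_def singular_values_2x2)

lemma
  assumes "0 \<le> det F"
  shows lambda_min_le_max: "lambda_min F \<le> lambda_max F"
    and lambda_max_minus_min: "lambda_max F - lambda_min F = anticonformal_norm F"
    and lambda_max_mult_min: "lambda_max F * lambda_min F = det F"
proof -
  show "lambda_min F \<le> lambda_max F" "lambda_max F - lambda_min F = anticonformal_norm F"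
    using anticonformal_norm_nonneg[of F]
    by (simp_all add: lambda_max_eq[OF assms] lambda_min_eq[OF assms] field_simps)
  have "lambda_max F * lambda_min F = ((conformal_norm F)\<^sup>2 - (anticonformal_norm F)\<^sup>2) / 4"
    by (simp add: lambda_max_eq[OF assms] lambda_min_eq[OF assms] power2_eq_square field_simps)
  then show "lambda_max F * lambda_min F = det F"
    by (simp add: conformal_norm_sq_minus_anticonformal_norm_sq)
qed

lemma lambda_min_pos:
  assumes "0 < det F"
  shows "0 < lambda_min F"
  using anticonformal_norm_less_conformal_norm[OF assms] lambda_min_eq[of F] assms by simp

lemma W_magic_minus_eq:
  assumes "0 < det F"
  shows "W_magic_minus F = lambda_max F / lambda_min F - 2 * ln (lambda_min F)"
  using lambda_min_pos[OF assms] lambda_min_le_max[of F] assms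
  by (simp add: W_magic_minus_def ln_div ln_mult)

lemma anticonformal_norm_scaleR: "anticonformal_norm (c *\<^sub>R F) = \<bar>c\<bar> * anticonformal_norm F"
proof -
  have "(c * F$1$1 - c * F$2$2)\<^sup>2 + (c * F$1$2 + c * F$2$1)\<^sup>2
          = c\<^sup>2 * ((F$1$1 - F$2$2)\<^sup>2 + (F$1$2 + F$2$1)\<^sup>2)"
    by algebra
  then show ?thesis
    by (simp add: anticonformal_norm_def real_sqrt_mult)
qed

lemma anticonformal_norm_triangle:
  "anticonformal_norm (F + G) \<le> anticonformal_norm F + anticonformal_norm G"
  using real_sqrt_sum_squares_triangle_ineq
    [of "F$1$1 - F$2$2" "G$1$1 - G$2$2" "F$1$2 + F$2$1" "G$1$2 + G$2$1"]
  by (simp add: anticonformal_norm_def algebra_simps)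

lemma convex_on_anticonformal_norm: "convex_on UNIV anticonformal_norm"
proof (rule convex_onI)
  fix t :: real and F G :: "real^2^2"
  assume "0 < t" "t < 1"
  then show "anticonformal_norm ((1 - t) *\<^sub>R F + t *\<^sub>R G)
               \<le> (1 - t) * anticonformal_norm F + t * anticonformal_norm G"
    using anticonformal_norm_triangle[of "(1 - t) *\<^sub>R F" "t *\<^sub>R G"]
    by (simp add: anticonformal_norm_scaleR)
qed simp

definition magic_minorant :: "real \<Rightarrow> (real^2^2) \<times> real \<Rightarrow> real" where
  "magic_minorant t z = 2 + 2 * anticonformal_norm (fst z) / t - snd z / t\<^sup>2 - 2 * ln t"

definition magic_polyconvex_extension :: "(real^2^2) \<times> real \<Rightarrow> ereal" where
  "magic_polyconvex_extension z = (SUP t\<in>{0<..}. ereal (magic_minorant t z))"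

lemma convex_on_magic_minorant:
  assumes "0 < t"
  shows "convex_on UNIV (magic_minorant t)"
proof (rule convex_onI)
  fix s :: real and z w :: "(real^2^2) \<times> real"
  assume s: "0 < s" "s < 1"
  let ?v = "(1 - s) *\<^sub>R z + s *\<^sub>R w"
  have "anticonformal_norm (fst ?v) / t
          \<le> ((1 - s) * anticonformal_norm (fst z) + s * anticonformal_norm (fst w)) / t"
    using convex_onD[OF convex_on_anticonformal_norm, of s "fst z" "fst w"] s assms
    by (simp add: divide_right_mono)
  moreover have "magic_minorant t ?v = 2 + 2 * (anticonformal_norm (fst ?v) / t)
                   - ((1 - s) * snd z + s * snd w) / t\<^sup>2 - 2 * ln t"
    by (simp add: magic_minorant_def)
  moreover have "(1 - s) * magic_minorant t z + s * magic_minorant t w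
      = 2 + 2 * (((1 - s) * anticonformal_norm (fst z) + s * anticonformal_norm (fst w)) / t)
          - ((1 - s) * snd z + s * snd w) / t\<^sup>2 - 2 * ln t"
    using assms by (simp add: magic_minorant_def field_simps)
  ultimately show "magic_minorant t ?v \<le> (1 - s) * magic_minorant t z + s * magic_minorant t w"
    by linarith
qed simp

lemma ext_convex_SUP:
  fixes f :: "'i \<Rightarrow> 'a::real_vector \<Rightarrow> real"
  assumes "I \<noteq> {}" and "\<And>i. i \<in> I \<Longrightarrow> convex_on UNIV (f i)"
  shows "ext_convex (\<lambda>z. SUP i\<in>I. ereal (f i z))"
  unfolding ext_convex_def
proof
  obtain i where "i \<in> I" using assms(1) by blast
  then show "\<forall>z. (SUP i\<in>I. ereal (f i z)) \<noteq> - \<infinity>"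
    by (metis MInfty_neq_ereal(1) SUP_upper ereal_infty_less_eq(2))
  have "{(z, r). (SUP i\<in>I. ereal (f i z)) \<le> ereal r} = (\<Inter>i\<in>I. epigraph UNIV (f i))"
    by (auto simp: epigraph_def SUP_le_iff)
  then show "convex {(z, r). (SUP i\<in>I. ereal (f i z)) \<le> ereal r}"
    using assms(2) by (simp add: convex_INT convex_epigraph)
qed

lemma ext_convex_magic_polyconvex_extension: "ext_convex magic_polyconvex_extension"
  unfolding magic_polyconvex_extension_def
  by (rule ext_convex_SUP) (auto intro: convex_on_magic_minorant)

lemma magic_profile_le:
  fixes a b t :: real
  assumes "0 < b" "b \<le> a" "0 < t"
  shows "2 + 2 * (a - b) / t - a * b / t\<^sup>2 - 2 * ln t \<le> a / b - 2 * ln b"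
proof -
  have "2 + 2 * (a - b) / t - a * b / t\<^sup>2 - 2 * ln t - (a / b - 2 * ln b)
          = 2 * (ln (b / t) - (b / t - 1)) - a * (t - b)\<^sup>2 / (b * t\<^sup>2)"
    using assms by (simp add: ln_div field_simps power2_eq_square)
  moreover have "ln (b / t) \<le> b / t - 1"
    using assms by (intro ln_le_minus_one) simp
  moreover have "0 \<le> a * (t - b)\<^sup>2 / (b * t\<^sup>2)"
    using assms by simp
  ultimately show ?thesis
    by argo
qed

lemma magic_polyconvex_extension_det_pos:
  assumes "0 < det F"
  shows "magic_polyconvex_extension (F, det F) = ereal (W_magic_minus F)"
proof -
  let ?a = "lambda_max F" and ?b = "lambda_min F"
  have det_nonneg: "0 \<le> det F"
    using assms by simp
  have b_pos: "0 < ?b" and b_le_a: "?b \<le> ?a"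
    using lambda_min_pos[OF assms] lambda_min_le_max[OF det_nonneg] .
  have minorant: "magic_minorant t (F, det F) = 2 + 2 * (?a - ?b) / t - ?a * ?b / t\<^sup>2 - 2 * ln t" for t
    by (simp add: magic_minorant_def lambda_max_minus_min[OF det_nonneg] lambda_max_mult_min[OF det_nonneg])
  show ?thesis
    unfolding magic_polyconvex_extension_def W_magic_minus_eq[OF assms]
  proof (rule SUP_eqI)
    fix t :: real
    assume "t \<in> {0<..}"
    then show "ereal (magic_minorant t (F, det F)) \<le> ereal (?a / ?b - 2 * ln ?b)"
      using magic_profile_le[OF b_pos b_le_a] by (simp add: minorant)
  next
    fix y
    assume "\<And>t. t \<in> {0<..} \<Longrightarrow> ereal (magic_minorant t (F, det F)) \<le> y"
    moreover have "magic_minorant ?b (F, det F) = ?a / ?b - 2 * ln ?b"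
      using b_pos by (simp add: minorant field_simps power2_eq_square)
    ultimately show "ereal (?a / ?b - 2 * ln ?b) \<le> y"
      using b_pos by force
  qed
qed

lemma magic_polyconvex_extension_det_nonpos:
  assumes "\<delta> \<le> 0"
  shows "magic_polyconvex_extension (F, \<delta>) = \<infinity>"
  unfolding magic_polyconvex_extension_def
proof (rule SUP_PInfty)
  fix n :: nat
  define t where "t = exp (- real n / 2)"
  have "0 < t" by (simp add: t_def)
  moreover have "real n \<le> magic_minorant t (F, \<delta>)"
  proof -
    have "0 \<le> 2 * anticonformal_norm F / t" "0 \<le> - \<delta> / t\<^sup>2"
      using \<open>0 < t\<close> assms anticonformal_norm_nonneg[of F] by (simp_all add: divide_nonpos_pos)
    moreover have "2 * ln t = - real n" by (simp add: t_def)
    ultimately show ?thesis by (simp add: magic_minorant_def)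
  qed
  ultimately show "\<exists>t\<in>{0<..}. ereal (real n) \<le> ereal (magic_minorant t (F, \<delta>))"
    by auto
qed

theorem lemma5p1:
  shows "polyconvex W_magic_minus"
  unfolding polyconvex_def
proof (intro exI conjI allI)
  show "ext_convex magic_polyconvex_extension"
    by (rule ext_convex_magic_polyconvex_extension)
  fix F :: "real^2^2"
  show "magic_polyconvex_extension (F, det F)
          = (if det F > 0 then ereal (W_magic_minus F) else \<infinity>)"
    using magic_polyconvex_extension_det_pos[of F] magic_polyconvex_extension_det_nonpos[of "det F" F]
    by simp
qed

end
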